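(* There is a constant $C>0$ such that for all $a\neq b$ in $\mathbb{R}/\tau\mathbb{Z}$ with $0\notin Z(a,b)$, $$\sum_{n\in Z(a,b)}\frac1{|n|^3}\le C\,\frac{\sum_{n\in Z(a,b)}\frac1{|n|^5}}{\sum_{n\in Z(a,b)}\frac1{n^2}}.$$
   Context: $\tau=\frac{1+\sqrt5}{2}$. For real $x$, $x\bmod\tau$ is its image in $\mathbb{R}/\tau\mathbb{Z}$. For $a,b\in\mathbb{R}/\tau\mathbb{Z}$, $(a,b)$ denotes the open arc from $a$ to $b$ in the positive direction, and $Z(a,b)$ is the set of integers $n$ with $n\bmod\tau\in(a,b)$. The constant $C$ is independent of all variables. *)

theory Defs
  imports "HOL-Analysis.Analysis"
begin

definition tau :: real where
  "tau = (1 + sqrt 5) / 2"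

definition modtau :: "real \<Rightarrow> real" where
  "modtau x = x - tau * of_int \<lfloor>x / tau\<rfloor>"

text \<open>x mod tau lies on the open arc from a mod tau to b mod tau, positive direction.\<close>
definition in_arc :: "real \<Rightarrow> real \<Rightarrow> real \<Rightarrow> bool" where
  "in_arc a b x \<longleftrightarrow> 0 < modtau (x - a) \<and> modtau (x - a) < modtau (b - a)"

definition Zarc :: "real \<Rightarrow> real \<Rightarrow> int set" where
  "Zarc a b = {n. in_arc a b (of_int n)}"

end

theory Submission
  imports Defs
begin

text \<open>The golden ratio is badly approximable: the norm \<open>k\<^sup>2 - k q - q\<^sup>2\<close> of
  \<open>k - q tau\<close> is a nonzero integer, so two distinct integers of an arc of length \<open>L\<close> are more
  than \<open>1 / (2 L)\<close> apart. Conversely, moving a rounded lattice point of \<open>\<int>[tau]\<close> by a power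
  of the unit \<open>psi = 1 - tau\<close> produces an integer \<open>n\<close> in the arc with \<open>L \<bar>n\<bar> \<le> 80\<close>.
  So if \<open>m\<close> is the least \<open>\<bar>n\<bar>\<close> on the arc, the integers of the arc are \<open>m / 160\<close>-separated
  and of modulus at least \<open>m\<close>; each sum of \<open>1 / \<bar>n\<bar>\<^sup>j\<close> (\<open>j \<ge> 2\<close>) is then
  comparable to \<open>1 / m\<^sup>j\<close>, and the inequality reduces to \<open>1 / m\<^sup>3 = (1 / m\<^sup>5) / (1 / m\<^sup>2)\<close>.\<close>

lemma tau_bounds: "3/2 < tau" "tau < 2"
proof -
  have "2 < sqrt 5" by (rule real_less_rsqrt) simp
  moreover have "sqrt 5 < 3" by (rule real_less_lsqrt) auto
  ultimately show "3/2 < tau" "tau < 2" unfolding tau_def by auto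
qed

lemma tau_square: "tau * tau = tau + 1"
  unfolding tau_def by (simp add: field_simps)

definition psi :: real where
  "psi = 1 - tau"

lemma tau_add_psi: "tau + psi = 1"
  unfolding psi_def by simp

lemma tau_mult_psi: "tau * psi = -1"
  using tau_square unfolding psi_def by (simp add: algebra_simps)

lemma abs_psi: "\<bar>psi\<bar> = tau - 1"
  using tau_bounds unfolding psi_def by simp

lemma modtau_eq_frac: "modtau x = tau * frac (x / tau)"
  using tau_bounds unfolding modtau_def frac_def by (simp add: algebra_simps)

lemma modtau_bounds: "0 \<le> modtau x" "modtau x < tau"
  using tau_bounds frac_lt_1[of "x / tau"] unfolding modtau_eq_frac by auto

lemma modtau_add_mult_tau [simp]: "modtau (x + tau * of_int j) = modtau x"
proof -
  have "(x + tau * of_int j) / tau = x / tau + of_int j"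
    using tau_bounds by (simp add: field_simps)
  then show ?thesis unfolding modtau_eq_frac by simp
qed

lemma modtau_eq_self: "0 \<le> x \<Longrightarrow> x < tau \<Longrightarrow> modtau x = x"
  using tau_bounds unfolding modtau_eq_frac by (simp add: frac_eq field_simps)

lemma modtau_cases: obtains j where "modtau x = x - tau * of_int j"
  unfolding modtau_def by blast

lemma modtau_diff_pos:
  assumes "modtau a \<noteq> modtau b"
  shows "0 < modtau (b - a)"
proof -
  obtain j where j: "modtau (b - a) = b - a - tau * of_int j" by (rule modtau_cases)
  have "modtau (b - a) \<noteq> 0"
  proof
    assume "modtau (b - a) = 0"
    then have "b = a + tau * of_int j" using j by simp
    then show False using assms by simp
  qed
  then show ?thesis using modtau_bounds(1)[of "b - a"] by linarith
qed

lemma golden_norm_zero_imp_zero: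
  fixes k q :: int
  assumes "k * k - k * q - q * q = 0"
  shows "k = 0"
  using assms
proof (induction "nat (\<bar>k\<bar> + \<bar>q\<bar>)" arbitrary: k q rule: less_induct)
  case less
  show ?case
  proof (rule ccontr)
    assume k0: "k \<noteq> 0"
    have "even k \<and> even q"
    proof (rule ccontr)
      assume "\<not> (even k \<and> even q)"
      then have "odd (k * k - k * q - q * q)" by auto
      then show False using less.prems by simp
    qed
    then obtain k' q' where kq: "k = 2 * k'" "q = 2 * q'" by (meson evenE)
    then have "k' * k' - k' * q' - q' * q' = 0" using less.prems by (simp add: algebra_simps)
    moreover have "nat (\<bar>k'\<bar> + \<bar>q'\<bar>) < nat (\<bar>k\<bar> + \<bar>q\<bar>)" using kq k0 by auto
    ultimately have "k' = 0" using less.hyps by blast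
    then show False using kq k0 by simp
  qed
qed

text \<open>The product of the two conjugates below is the integer \<open>k\<^sup>2 - k q - q\<^sup>2\<close>,
  which is nonzero, while the conjugate factor is at most \<open>2 \<bar>k\<bar>\<close>.\<close>
lemma golden_badly_approximable:
  fixes k q :: int
  assumes "k \<noteq> 0"
  shows "1 \<le> 2 * \<bar>real_of_int k\<bar> * \<bar>real_of_int k - real_of_int q * tau\<bar>"
proof (cases "\<bar>real_of_int k - real_of_int q * tau\<bar> \<ge> 1")
  case True
  moreover have "1 \<le> \<bar>real_of_int k\<bar>" using assms by linarith
  ultimately have "1 * 1 \<le> \<bar>real_of_int k\<bar> * \<bar>real_of_int k - real_of_int q * tau\<bar>"
    by (intro mult_mono) auto
  then show ?thesis by simp
next
  case False
  have "(real_of_int k - real_of_int q * tau) * (real_of_int k - real_of_int q * psi)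
      = real_of_int k * real_of_int k - real_of_int k * real_of_int q * (tau + psi)
        + real_of_int q * real_of_int q * (tau * psi)"
    by (simp add: algebra_simps)
  also have "\<dots> = real_of_int (k * k - k * q - q * q)"
    by (simp add: tau_add_psi tau_mult_psi)
  finally have "(real_of_int k - real_of_int q * tau) * (real_of_int k - real_of_int q * psi)
      = real_of_int (k * k - k * q - q * q)" .
  moreover have "k * k - k * q - q * q \<noteq> 0" using golden_norm_zero_imp_zero assms by blast
  then have "1 \<le> \<bar>real_of_int (k * k - k * q - q * q)\<bar>" by linarith
  ultimately have norm: "1 \<le> \<bar>real_of_int k - real_of_int q * tau\<bar> * \<bar>real_of_int k - real_of_int q * psi\<bar>"
    by (simp only: abs_mult[symmetric])
  have "\<bar>real_of_int q * psi\<bar> = \<bar>real_of_int q\<bar> * (tau - 1)" by (simp add: abs_mult abs_psi)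
  also have "\<dots> \<le> \<bar>real_of_int q\<bar> * (tau / 2)" using tau_bounds by (intro mult_left_mono) auto
  also have "\<dots> = \<bar>real_of_int q * tau\<bar> / 2" using tau_bounds by (simp add: abs_mult)
  also have "\<dots> \<le> \<bar>real_of_int k\<bar>" using False assms by linarith
  finally have "\<bar>real_of_int q * psi\<bar> \<le> \<bar>real_of_int k\<bar>" .
  then have "\<bar>real_of_int k - real_of_int q * psi\<bar> \<le> 2 * \<bar>real_of_int k\<bar>" by linarith
  then have "\<bar>real_of_int k - real_of_int q * tau\<bar> * \<bar>real_of_int k - real_of_int q * psi\<bar>
      \<le> \<bar>real_of_int k - real_of_int q * tau\<bar> * (2 * \<bar>real_of_int k\<bar>)"
    by (rule mult_left_mono) simp
  with norm show ?thesis by (simp add: mult_ac)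
qed

lemma Zarc_separated:
  assumes "n \<in> Zarc a b" "n' \<in> Zarc a b" "n \<noteq> n'"
  shows "1 < 2 * modtau (b - a) * \<bar>real_of_int n - real_of_int n'\<bar>"
proof -
  obtain j j' where j: "modtau (of_int n - a) = of_int n - a - tau * of_int j"
    and j': "modtau (of_int n' - a) = of_int n' - a - tau * of_int j'"
    by (meson modtau_cases)
  have "\<bar>modtau (of_int n - a) - modtau (of_int n' - a)\<bar> < modtau (b - a)"
    using assms(1,2) unfolding Zarc_def in_arc_def by auto
  moreover have "modtau (of_int n - a) - modtau (of_int n' - a)
      = real_of_int (n - n') - real_of_int (j - j') * tau"
    unfolding j j' by (simp add: algebra_simps)
  ultimately have "2 * \<bar>real_of_int (n - n')\<bar> * \<bar>real_of_int (n - n') - real_of_int (j - j') * tau\<bar>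
      < 2 * \<bar>real_of_int (n - n')\<bar> * modtau (b - a)"
    using assms(3) by (intro mult_strict_left_mono) auto
  moreover have "1 \<le> 2 * \<bar>real_of_int (n - n')\<bar> * \<bar>real_of_int (n - n') - real_of_int (j - j') * tau\<bar>"
    using assms(3) by (intro golden_badly_approximable) simp
  ultimately show ?thesis by (simp add: mult_ac)
qed

lemma golden_unit_power:
  fixes p q :: int
  shows "\<exists>p' q' :: int. of_int p' + of_int q' * tau = psi ^ k * (of_int p + of_int q * tau)
     \<and> of_int p' + of_int q' * psi = tau ^ k * (of_int p + of_int q * psi)"
proof (induction k)
  case 0
  show ?case by auto
next
  case (Suc k)
  then obtain p' q' :: int
    where IH: "of_int p' + of_int q' * tau = psi ^ k * (of_int p + of_int q * tau)"
      "of_int p' + of_int q' * psi = tau ^ k * (of_int p + of_int q * psi)"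
    by blast
  have "psi * (of_int p' + of_int q' * tau) = of_int p' * psi + of_int q' * (tau * psi)"
    "tau * (of_int p' + of_int q' * psi) = of_int p' * tau + of_int q' * (tau * psi)"
    by (simp_all add: algebra_simps)
  then have "of_int (p' - q') + of_int (- p') * tau = psi * (of_int p' + of_int q' * tau)"
    "of_int (p' - q') + of_int (- p') * psi = tau * (of_int p' + of_int q' * psi)"
    unfolding tau_mult_psi by (simp_all add: psi_def algebra_simps)
  then show ?case using IH by (metis mult.assoc power_Suc)
qed

lemma golden_lattice_rounding:
  "\<exists>p q :: int. \<bar>of_int p + of_int q * tau - x\<bar> \<le> 1 + tau
     \<and> \<bar>of_int p + of_int q * psi - y\<bar> \<le> 1 + tau"
proof -
  have round: "\<bar>of_int \<lfloor>s\<rfloor> + of_int \<lfloor>t\<rfloor> * c - (s + t * c)\<bar> \<le> 1 + \<bar>c\<bar>" for s t c :: real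
  proof -
    have "\<bar>(of_int \<lfloor>t\<rfloor> - t) * c\<bar> \<le> 1 * \<bar>c\<bar>"
      unfolding abs_mult by (intro mult_right_mono) linarith+
    then show ?thesis by (simp add: algebra_simps) linarith
  qed
  define t where "t = (x - y) / (tau - psi)"
  define s where "s = x - t * tau"
  have "tau - psi \<noteq> 0" using tau_bounds unfolding psi_def by simp
  then have "t * (tau - psi) = x - y" unfolding t_def by simp
  then have "s + t * psi = y" unfolding s_def by (simp add: algebra_simps)
  moreover have "s + t * tau = x" unfolding s_def by simp
  moreover have "\<bar>psi\<bar> \<le> tau" using abs_psi by simp
  ultimately show ?thesis using round[of s t tau] round[of s t psi] tau_bounds by force
qed

text \<open>Round a suitable lattice point and move it with the unit \<open>psi\<^sup>k\<close>, which contracts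
  the first coordinate and, through the conjugate \<open>tau\<^sup>k\<close>, expands the second.\<close>
lemma golden_inhomogeneous_approx:
  "\<exists>p q :: int. \<bar>of_int p + of_int q * tau - y\<bar> \<le> (1 + tau) * (tau - 1) ^ k
     \<and> \<bar>of_int p + of_int q * psi\<bar> \<le> (1 + tau) * tau ^ k"
proof -
  have "psi \<noteq> 0" using abs_psi tau_bounds by auto
  obtain p0 q0 :: int
    where r: "\<bar>of_int p0 + of_int q0 * tau - y / psi ^ k\<bar> \<le> 1 + tau"
      "\<bar>of_int p0 + of_int q0 * psi - 0\<bar> \<le> 1 + tau"
    using golden_lattice_rounding by blast
  obtain p q :: int
    where u: "of_int p + of_int q * tau = psi ^ k * (of_int p0 + of_int q0 * tau)"
      "of_int p + of_int q * psi = tau ^ k * (of_int p0 + of_int q0 * psi)"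
    using golden_unit_power by blast
  have "of_int p + of_int q * tau - y = psi ^ k * (of_int p0 + of_int q0 * tau - y / psi ^ k)"
    using \<open>psi \<noteq> 0\<close> unfolding u by (simp add: field_simps)
  then have "\<bar>of_int p + of_int q * tau - y\<bar>
      = (tau - 1) ^ k * \<bar>of_int p0 + of_int q0 * tau - y / psi ^ k\<bar>"
    by (simp add: abs_mult power_abs abs_psi)
  also have "\<dots> \<le> (tau - 1) ^ k * (1 + tau)"
    using r(1) tau_bounds by (intro mult_left_mono) auto
  finally have "\<bar>of_int p + of_int q * tau - y\<bar> \<le> (tau - 1) ^ k * (1 + tau)" .
  moreover have "\<bar>of_int p + of_int q * psi\<bar> \<le> tau ^ k * (1 + tau)"
    using r(2) tau_bounds unfolding u by (simp add: abs_mult mult_left_mono)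
  ultimately show ?thesis by (auto simp: mult.commute)
qed

lemma exists_power_bracket:
  fixes b c x :: real
  assumes "1 < b" "0 < x" "x \<le> c"
  obtains k where "c < x * b ^ k" "x * b ^ k \<le> b * c"
proof -
  define P where "P k \<longleftrightarrow> c < x * b ^ k" for k
  obtain k0 where "c / x < b ^ k0" using real_arch_pow assms(1) by blast
  then have "P k0" unfolding P_def using assms(2) by (simp add: field_simps)
  define k where "k = (LEAST k. P k)"
  have "P k" unfolding k_def using \<open>P k0\<close> by (rule LeastI)
  moreover have "k \<noteq> 0" using \<open>P k\<close> assms(3) unfolding P_def by (cases k) auto
  then obtain j where "k = Suc j" using not0_implies_Suc by blast
  then have "\<not> P j" unfolding k_def by (metis lessI not_less_Least)
  then have "x * b ^ k \<le> b * c" using \<open>k = Suc j\<close> assms(1) unfolding P_def by simp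
  ultimately show ?thesis using that unfolding P_def by blast
qed

lemma golden_approx_with_small_conjugate:
  assumes "0 < L" "L < tau"
  obtains p q :: int where "\<bar>of_int p + of_int q * tau - y\<bar> < L / 2"
    "L * \<bar>of_int p + of_int q * psi\<bar> \<le> 36"
proof -
  have "L \<le> 2 * (1 + tau)" using assms tau_bounds by simp
  then obtain k where k: "2 * (1 + tau) < L * tau ^ k" "L * tau ^ k \<le> tau * (2 * (1 + tau))"
    using exists_power_bracket[of tau L "2 * (1 + tau)"] assms(1) tau_bounds by auto
  obtain p q :: int
    where pq: "\<bar>of_int p + of_int q * tau - y\<bar> \<le> (1 + tau) * (tau - 1) ^ k"
      "\<bar>of_int p + of_int q * psi\<bar> \<le> (1 + tau) * tau ^ k"
    using golden_inhomogeneous_approx by blast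
  have "(tau - 1) ^ k * tau ^ k = 1"
    using tau_square by (simp add: power_mult_distrib[symmetric] algebra_simps)
  then have "(1 + tau) * (tau - 1) ^ k * tau ^ k < L / 2 * tau ^ k"
    using k(1) by (simp add: mult.assoc)
  then have "(1 + tau) * (tau - 1) ^ k < L / 2"
    using tau_bounds by (simp add: mult_less_cancel_right_pos)
  moreover have "L * ((1 + tau) * tau ^ k) \<le> 36"
  proof -
    have "L * tau ^ k \<le> 4 * tau + 2"
      using k(2) tau_square by (simp add: algebra_simps)
    then have "(1 + tau) * (L * tau ^ k) \<le> 3 * 10"
      using tau_bounds assms(1) by (intro mult_mono) auto
    then show ?thesis by (simp add: mult_ac)
  qed
  moreover have "L * \<bar>of_int p + of_int q * psi\<bar> \<le> L * ((1 + tau) * tau ^ k)"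
    using pq(2) assms(1) by simp
  ultimately show ?thesis using pq(1) by (intro that[of p q]) linarith+
qed

lemma Zarc_has_small_element:
  assumes "0 < modtau (b - a)"
  obtains n where "n \<in> Zarc a b" "modtau (b - a) * \<bar>real_of_int n\<bar> \<le> 80"
proof -
  define L where "L = modtau (b - a)"
  have L: "0 < L" "L < tau" using assms modtau_bounds unfolding L_def by auto
  obtain p q :: int where X: "\<bar>of_int p + of_int q * tau - (modtau a + L / 2)\<bar> < L / 2"
    and Y: "L * \<bar>of_int p + of_int q * psi\<bar> \<le> 36"
    using golden_approx_with_small_conjugate[OF L] by blast
  define X where "X = of_int p + of_int q * tau"
  define Y where "Y = of_int p + of_int q * psi"
  have arc: "0 < X - modtau a" "X - modtau a < L" using X unfolding X_def by linarith+
  obtain ja where ja: "modtau a = a - tau * of_int ja" by (rule modtau_cases)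
  have "of_int p - a = (X - modtau a) + tau * of_int (- q - ja)"
    unfolding X_def ja by (simp add: algebra_simps)
  then have "modtau (of_int p - a) = modtau (X - modtau a)"
    by (simp only: modtau_add_mult_tau)
  also have "\<dots> = X - modtau a"
    using arc L by (intro modtau_eq_self) auto
  finally have "modtau (of_int p - a) = X - modtau a" .
  then have "p \<in> Zarc a b" using arc unfolding Zarc_def in_arc_def L_def by simp
  have "\<bar>X\<bar> < 4" using arc modtau_bounds[of a] L tau_bounds by linarith
  \<comment> \<open>\<open>p\<close> is recovered from the conjugate pair \<open>X\<close>, \<open>Y\<close>, both of which are small\<close>
  have "of_int p * (tau - psi) = tau * Y - psi * X"
    unfolding X_def Y_def by (simp add: algebra_simps)
  have "tau - psi \<ge> 1" using tau_bounds unfolding psi_def by simp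
  then have "\<bar>of_int p\<bar> \<le> \<bar>of_int p\<bar> * (tau - psi)" by (simp add: mult_le_cancel_left1)
  also have "\<dots> = \<bar>tau * Y - psi * X\<bar>"
    using \<open>tau - psi \<ge> 1\<close> \<open>of_int p * (tau - psi) = tau * Y - psi * X\<close>
    by (metis abs_mult abs_of_pos zero_less_one order_less_le_trans)
  also have "\<dots> \<le> tau * \<bar>Y\<bar> + \<bar>psi\<bar> * \<bar>X\<bar>"
    using abs_triangle_ineq4[of "tau * Y" "psi * X"] tau_bounds by (simp add: abs_mult)
  also have "\<dots> \<le> 2 * \<bar>Y\<bar> + 1 * \<bar>X\<bar>"
    using tau_bounds abs_psi by (intro add_mono mult_right_mono) auto
  finally have "L * \<bar>of_int p\<bar> \<le> L * (2 * \<bar>Y\<bar> + 1 * \<bar>X\<bar>)"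
    using L by (intro mult_left_mono) auto
  also have "\<dots> = 2 * (L * \<bar>Y\<bar>) + L * \<bar>X\<bar>" by (simp add: algebra_simps)
  also have "\<dots> \<le> 2 * 36 + 2 * 4"
  proof (rule add_mono)
    show "2 * (L * \<bar>Y\<bar>) \<le> 2 * 36" using Y unfolding Y_def by simp
    show "L * \<bar>X\<bar> \<le> 2 * 4" using L tau_bounds \<open>\<bar>X\<bar> < 4\<close> by (intro mult_mono) auto
  qed
  finally show ?thesis using that \<open>p \<in> Zarc a b\<close> unfolding L_def by simp
qed

lemma summable_on_inverse_square_int:
  "(\<lambda>i::int. 1 / (\<bar>real_of_int i\<bar> + 1) ^ 2) summable_on UNIV"
proof -
  let ?g = "\<lambda>i::int. 1 / (\<bar>real_of_int i\<bar> + 1) ^ 2"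
  have "(\<lambda>k::nat. 1 / (1 + real k) ^ 2) summable_on UNIV"
    using inverse_squares_sums[THEN sums_summable] by (simp add: summable_on_UNIV_nonneg_real_iff)
  moreover have "?g \<circ> int = (\<lambda>k. 1 / (1 + real k) ^ 2)"
    and "?g \<circ> (\<lambda>k. - int k) = (\<lambda>k. 1 / (1 + real k) ^ 2)"
    by (auto simp: add.commute)
  moreover have "inj int" "inj (\<lambda>k::nat. - int k)" by (auto intro: injI)
  ultimately have "?g summable_on range int" "?g summable_on range (\<lambda>k. - int k)"
    by (metis summable_on_reindex)+
  moreover have "UNIV = range int \<union> range (\<lambda>k. - int k)"
    by (auto intro: int_cases2[where z=x for x] simp: image_iff)
  ultimately show ?thesis by (metis summable_on_union)
qed

lemma infsum_le_of_injective_majorant: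
  fixes f :: "'a \<Rightarrow> real" and g :: "'b \<Rightarrow> real"
  assumes "inj_on \<phi> S" "g summable_on UNIV" "\<And>y. 0 \<le> g y"
    and "\<And>x. x \<in> S \<Longrightarrow> 0 \<le> f x" "\<And>x. x \<in> S \<Longrightarrow> f x \<le> g (\<phi> x)"
  shows "f summable_on S" "infsum f S \<le> infsum g UNIV"
proof -
  have "g summable_on \<phi> ` S" using assms(2) by (rule summable_on_subset_banach) simp
  then have g\<phi>: "(g \<circ> \<phi>) summable_on S" using summable_on_reindex assms(1) by blast
  show f: "f summable_on S"
    by (rule summable_on_comparison_test[OF g\<phi>]) (use assms in auto)
  have "infsum f S \<le> infsum (g \<circ> \<phi>) S"
    by (rule infsum_mono[OF f g\<phi>]) (use assms in auto)
  also have "\<dots> = infsum g (\<phi> ` S)" using infsum_reindex assms(1) by metis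
  also have "\<dots> \<le> infsum g UNIV"
    using \<open>g summable_on \<phi> ` S\<close> assms(2,3) by (intro infsum_mono2) auto
  finally show "infsum f S \<le> infsum g UNIV" .
qed

lemma min_mult_floor_div_le:
  fixes m d x :: real
  assumes "0 < m" "0 < d" "m \<le> \<bar>x\<bar>"
  shows "min m d * (\<bar>real_of_int \<lfloor>x / d\<rfloor>\<bar> + 1) \<le> 3 * \<bar>x\<bar>"
proof -
  define i where "i = \<lfloor>x / d\<rfloor>"
  have "real_of_int i \<le> x / d" "x / d < real_of_int i + 1" unfolding i_def by linarith+
  then have "real_of_int i * d \<le> x" "x < (real_of_int i + 1) * d"
    using assms(2) by (simp_all add: pos_le_divide_eq pos_divide_less_eq)
  show ?thesis
  proof (cases "\<bar>i\<bar> \<le> 2")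
    case True
    then have "min m d * (\<bar>real_of_int i\<bar> + 1) \<le> m * 3"
      using assms(1,2) by (intro mult_mono) auto
    then show ?thesis using assms(3) unfolding i_def by linarith
  next
    case False
    have "d * (\<bar>real_of_int i\<bar> - 1) \<le> \<bar>x\<bar>"
    proof (cases "0 \<le> i")
      case True
      then show ?thesis using \<open>real_of_int i * d \<le> x\<close> assms(2) by (simp add: algebra_simps)
    next
      case False
      then show ?thesis using \<open>x < (real_of_int i + 1) * d\<close> by (simp add: algebra_simps)
    qed
    moreover have "min m d * (\<bar>real_of_int i\<bar> + 1) \<le> d * (3 * (\<bar>real_of_int i\<bar> - 1))"
      using False assms(1,2) by (intro mult_mono) auto
    ultimately show ?thesis unfolding i_def by (simp add: algebra_simps)
  qed
qed

text \<open>Elements of \<open>S\<close> in the same interval \<open>[i d, (i + 1) d)\<close> would be closer than \<open>d\<close>,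
  so \<open>n \<mapsto> \<lfloor>n / d\<rfloor>\<close> is injective on \<open>S\<close>.\<close>
lemma infsum_inverse_power_separated:
  fixes S :: "int set" and m d :: real and j :: nat
  assumes "0 < m" "0 < d" "2 \<le> j" "\<And>n. n \<in> S \<Longrightarrow> m \<le> \<bar>real_of_int n\<bar>"
    and "\<And>n n'. n \<in> S \<Longrightarrow> n' \<in> S \<Longrightarrow> n \<noteq> n' \<Longrightarrow> d \<le> \<bar>real_of_int n - real_of_int n'\<bar>"
  shows "(\<lambda>n. 1 / \<bar>real_of_int n\<bar> ^ j) summable_on S"
    "(\<Sum>\<^sub>\<infinity>n\<in>S. 1 / \<bar>real_of_int n\<bar> ^ j)
       \<le> (3 / min m d) ^ j * (\<Sum>\<^sub>\<infinity>i::int. 1 / (\<bar>real_of_int i\<bar> + 1) ^ 2)"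
proof -
  define \<phi> where "\<phi> n = \<lfloor>real_of_int n / d\<rfloor>" for n
  define g where "g i = (3 / min m d) ^ j * (1 / (\<bar>real_of_int i\<bar> + 1) ^ 2)" for i
  have "inj_on \<phi> S"
  proof (rule inj_onI, rule ccontr)
    fix n n' assume "n \<in> S" "n' \<in> S" "\<phi> n = \<phi> n'" "n \<noteq> n'"
    then have "\<bar>real_of_int n / d - real_of_int n' / d\<bar> < 1" unfolding \<phi>_def by linarith
    then have "\<bar>real_of_int n - real_of_int n'\<bar> / d < 1"
      using assms(2) by (simp add: diff_divide_distrib[symmetric] abs_divide)
    then have "\<bar>real_of_int n - real_of_int n'\<bar> < d" using assms(2) by (simp add: pos_divide_less_eq)
    then show False using assms(5)[OF \<open>n \<in> S\<close> \<open>n' \<in> S\<close> \<open>n \<noteq> n'\<close>] by linarith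
  qed
  moreover have "g summable_on UNIV"
    unfolding g_def by (intro summable_on_cmult_right summable_on_inverse_square_int)
  moreover have "1 / \<bar>real_of_int n\<bar> ^ j \<le> g (\<phi> n)" if "n \<in> S" for n
  proof -
    define e where "e = \<bar>real_of_int (\<phi> n)\<bar> + 1"
    define \<mu> where "\<mu> = min m d"
    have "\<mu> * e \<le> 3 * \<bar>real_of_int n\<bar>"
      unfolding e_def \<phi>_def \<mu>_def using assms(1,2,4) that by (intro min_mult_floor_div_le) auto
    moreover have "0 < \<mu>" "1 \<le> e" using assms(1,2) unfolding e_def \<mu>_def by auto
    ultimately have "3 / (3 * \<bar>real_of_int n\<bar>) \<le> 3 / (\<mu> * e)"
      by (intro frac_le) auto
    then have "1 / \<bar>real_of_int n\<bar> \<le> 3 / \<mu> * (1 / e)" by simp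
    then have "(1 / \<bar>real_of_int n\<bar>) ^ j \<le> (3 / \<mu> * (1 / e)) ^ j"
      by (intro power_mono) auto
    also have "\<dots> \<le> (3 / \<mu>) ^ j * (1 / e) ^ 2"
      unfolding power_mult_distrib using \<open>0 < \<mu>\<close> \<open>1 \<le> e\<close> assms(3)
      by (intro mult_left_mono power_decreasing) auto
    finally show ?thesis unfolding g_def e_def \<mu>_def by (simp add: power_one_over)
  qed
  moreover have "0 \<le> g i" for i
    unfolding g_def using assms(1,2) by simp
  ultimately have "(\<lambda>n. 1 / \<bar>real_of_int n\<bar> ^ j) summable_on S"
    "(\<Sum>\<^sub>\<infinity>n\<in>S. 1 / \<bar>real_of_int n\<bar> ^ j) \<le> infsum g UNIV"
    using infsum_le_of_injective_majorant[of \<phi> S g] by auto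
  moreover have "infsum g UNIV
      = (3 / min m d) ^ j * (\<Sum>\<^sub>\<infinity>i::int. 1 / (\<bar>real_of_int i\<bar> + 1) ^ 2)"
    unfolding g_def by (rule infsum_cmult_right) (rule summable_on_inverse_square_int)
  ultimately show "(\<lambda>n. 1 / \<bar>real_of_int n\<bar> ^ j) summable_on S"
    "(\<Sum>\<^sub>\<infinity>n\<in>S. 1 / \<bar>real_of_int n\<bar> ^ j)
       \<le> (3 / min m d) ^ j * (\<Sum>\<^sub>\<infinity>i::int. 1 / (\<bar>real_of_int i\<bar> + 1) ^ 2)"
    by simp_all
qed

lemma member_le_infsum:
  fixes f :: "'a \<Rightarrow> real"
  assumes "f summable_on S" "x \<in> S" "\<And>y. y \<in> S \<Longrightarrow> 0 \<le> f y"
  shows "f x \<le> infsum f S"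
  using finite_sum_le_infsum[of f S "{x}"] assms by simp

lemma inverse_power_sums_ratio_bound:
  fixes S :: "int set" and n0 :: int and c :: real
  assumes "n0 \<in> S" "n0 \<noteq> 0"
    and "\<And>n. n \<in> S \<Longrightarrow> \<bar>real_of_int n0\<bar> \<le> \<bar>real_of_int n\<bar>"
    and "\<And>n n'. n \<in> S \<Longrightarrow> n' \<in> S \<Longrightarrow> n \<noteq> n' \<Longrightarrow>
      \<bar>real_of_int n0\<bar> \<le> c * \<bar>real_of_int n - real_of_int n'\<bar>"
    and "1 \<le> c"
  shows "(\<Sum>\<^sub>\<infinity>n\<in>S. 1 / \<bar>real_of_int n\<bar> ^ 3)
      \<le> (3 * c) ^ 5 * (\<Sum>\<^sub>\<infinity>i::int. 1 / (\<bar>real_of_int i\<bar> + 1) ^ 2) ^ 2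
         * ((\<Sum>\<^sub>\<infinity>n\<in>S. 1 / \<bar>real_of_int n\<bar> ^ 5) / (\<Sum>\<^sub>\<infinity>n\<in>S. 1 / (real_of_int n) ^ 2))"
proof -
  define m where "m = \<bar>real_of_int n0\<bar>"
  define K where "K = (\<Sum>\<^sub>\<infinity>i::int. 1 / (\<bar>real_of_int i\<bar> + 1) ^ 2)"
  define A where "A j = (\<Sum>\<^sub>\<infinity>n\<in>S. 1 / \<bar>real_of_int n\<bar> ^ j)" for j :: nat
  have "0 < m" using assms(2) unfolding m_def by simp
  have "min m (m / c) = m / c" using \<open>0 < m\<close> assms(5) by (simp add: field_simps)
  then have summable: "(\<lambda>n. 1 / \<bar>real_of_int n\<bar> ^ j) summable_on S"
    and upper: "A j \<le> (3 * c / m) ^ j * K" if "2 \<le> j" for j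
    using infsum_inverse_power_separated[of m "m / c" j S] \<open>0 < m\<close> assms(3-5) that
    unfolding A_def K_def m_def by (simp_all add: field_simps)
  have lower: "1 / m ^ j \<le> A j" if "2 \<le> j" for j
    using member_le_infsum[OF summable[OF that] assms(1)] unfolding A_def m_def by simp
  have "0 < 1 / m ^ 2" using \<open>0 < m\<close> by simp
  moreover have "1 / m ^ 2 \<le> A 2" by (rule lower) simp
  ultimately have "0 < A 2" by linarith
  moreover have "A 2 \<le> (3 * c / m) ^ 2 * K" by (rule upper) simp
  ultimately have "0 < (3 * c / m) ^ 2 * K" by linarith
  then have "0 < K" using \<open>0 < m\<close> assms(5) by (simp add: zero_less_mult_iff)
  have "A 3 \<le> (3 * c / m) ^ 3 * K" by (rule upper) simp
  also have "\<dots> = (3 * c) ^ 5 * K ^ 2 * ((1 / m ^ 5) / ((3 * c / m) ^ 2 * K))"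
    using \<open>0 < m\<close> \<open>0 < K\<close> assms(5) by (simp add: field_simps power_divide eval_nat_numeral)
  also have "\<dots> \<le> (3 * c) ^ 5 * K ^ 2 * (A 5 / A 2)"
  proof (intro mult_left_mono frac_le)
    have "0 < 1 / m ^ 5" using \<open>0 < m\<close> by simp
    moreover show "1 / m ^ 5 \<le> A 5" by (rule lower) simp
    ultimately show "0 \<le> A 5" by linarith
  qed (use \<open>A 2 \<le> (3 * c / m) ^ 2 * K\<close> \<open>0 < A 2\<close> assms(5) in auto)
  finally show ?thesis unfolding A_def K_def by simp
qed

lemma Zarc_least_element_separated:
  assumes "modtau a \<noteq> modtau b" "0 \<notin> Zarc a b"
  obtains n0 where "n0 \<in> Zarc a b" "n0 \<noteq> 0"
    "\<And>n. n \<in> Zarc a b \<Longrightarrow> \<bar>real_of_int n0\<bar> \<le> \<bar>real_of_int n\<bar>"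
    "\<And>n n'. n \<in> Zarc a b \<Longrightarrow> n' \<in> Zarc a b \<Longrightarrow> n \<noteq> n' \<Longrightarrow>
      \<bar>real_of_int n0\<bar> \<le> 160 * \<bar>real_of_int n - real_of_int n'\<bar>"
proof -
  define L where "L = modtau (b - a)"
  have "0 < L" unfolding L_def using assms(1) by (rule modtau_diff_pos)
  obtain n1 where n1: "n1 \<in> Zarc a b" "L * \<bar>real_of_int n1\<bar> \<le> 80"
    using Zarc_has_small_element \<open>0 < L\<close> unfolding L_def by blast
  then obtain n0 where n0: "n0 \<in> Zarc a b" "\<And>n. n \<in> Zarc a b \<Longrightarrow> nat \<bar>n0\<bar> \<le> nat \<bar>n\<bar>"
    using ex_has_least_nat[of "\<lambda>n. n \<in> Zarc a b" n1 "\<lambda>n. nat \<bar>n\<bar>"] by blast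
  then have least: "\<bar>real_of_int n0\<bar> \<le> \<bar>real_of_int n\<bar>" if "n \<in> Zarc a b" for n
    using that by fastforce
  have "L * \<bar>real_of_int n0\<bar> \<le> L * \<bar>real_of_int n1\<bar>"
    using least[OF n1(1)] \<open>0 < L\<close> by (intro mult_left_mono) auto
  with n1(2) have small: "L * \<bar>real_of_int n0\<bar> \<le> 80" by linarith
  have "\<bar>real_of_int n0\<bar> \<le> 160 * \<bar>real_of_int n - real_of_int n'\<bar>"
    if "n \<in> Zarc a b" "n' \<in> Zarc a b" "n \<noteq> n'" for n n'
  proof -
    have "80 < L * (160 * \<bar>real_of_int n - real_of_int n'\<bar>)"
      using Zarc_separated[OF that] unfolding L_def by simp
    with small have "L * \<bar>real_of_int n0\<bar> < L * (160 * \<bar>real_of_int n - real_of_int n'\<bar>)"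
      by linarith
    then show ?thesis using \<open>0 < L\<close> by simp
  qed
  moreover have "n0 \<noteq> 0" using n0(1) assms(2) by auto
  ultimately show ?thesis using that n0(1) least by blast
qed

theorem lemma13:
  shows "\<exists>C>0. \<forall>a b :: real. modtau a \<noteq> modtau b \<and> (0::int) \<notin> Zarc a b \<longrightarrow>
    (\<Sum>\<^sub>\<infinity>n\<in>Zarc a b. 1 / \<bar>real_of_int n\<bar> ^ 3)
      \<le> C * ((\<Sum>\<^sub>\<infinity>n\<in>Zarc a b. 1 / \<bar>real_of_int n\<bar> ^ 5)
               / (\<Sum>\<^sub>\<infinity>n\<in>Zarc a b. 1 / (real_of_int n) ^ 2))"
proof (intro exI conjI allI impI)
  define K where "K = (\<Sum>\<^sub>\<infinity>i::int. 1 / (\<bar>real_of_int i\<bar> + 1) ^ 2)"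
  have "1 \<le> K"
    using member_le_infsum[OF summable_on_inverse_square_int, of 0] unfolding K_def by simp
  then show "0 < (3 * 160) ^ 5 * K ^ 2" by simp
  fix a b :: real
  assume "modtau a \<noteq> modtau b \<and> 0 \<notin> Zarc a b"
  then obtain n0 where "n0 \<in> Zarc a b" "n0 \<noteq> 0"
    "\<And>n. n \<in> Zarc a b \<Longrightarrow> \<bar>real_of_int n0\<bar> \<le> \<bar>real_of_int n\<bar>"
    "\<And>n n'. n \<in> Zarc a b \<Longrightarrow> n' \<in> Zarc a b \<Longrightarrow> n \<noteq> n' \<Longrightarrow>
      \<bar>real_of_int n0\<bar> \<le> 160 * \<bar>real_of_int n - real_of_int n'\<bar>"
    using Zarc_least_element_separated by blast
  then show "(\<Sum>\<^sub>\<infinity>n\<in>Zarc a b. 1 / \<bar>real_of_int n\<bar> ^ 3)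
      \<le> (3 * 160) ^ 5 * K ^ 2 * ((\<Sum>\<^sub>\<infinity>n\<in>Zarc a b. 1 / \<bar>real_of_int n\<bar> ^ 5)
               / (\<Sum>\<^sub>\<infinity>n\<in>Zarc a b. 1 / (real_of_int n) ^ 2))"
    unfolding K_def by (rule inverse_power_sums_ratio_bound) auto
qed

end
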